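(* Let $(X,\to,d_A)$ be a finitely branching metric transition system over $A$, and let $\alpha\colon\mathit{DPMet}(X)\to\mathrm{Pre}(X)$, $\alpha(d)=\{(x,y)\mid d(x,y)=0\}$, and $\gamma\colon\mathrm{Pre}(X)\to\mathit{DPMet}(X)$, $\gamma(R)=1-\chi_R$. Then $\alpha\circ\beta_S(d)=\beta_s\circ\alpha(d)$ for every $d\in\mathit{DPMet}(X)$, and consequently $\mu\,\beta_s=\alpha(\mu\,\beta_S)$.
   Context: $\delta(x)=\{(a,x')\mid x\xrightarrow{a}x'\}$, $\delta_a(x)=\{x'\mid x\xrightarrow{a}x'\}$; finitely branching: all $\delta(x)$ finite; $d_A$ is a metric on $A$ with values in $[0,1]$. $\mathit{DPMet}(X)$: directed pseudo-metrics on $X$, ordered pointwise; $\mathrm{Pre}(X)$: preorders on $X$, ordered by $\supseteq$; least fixpoints are taken in these lattices; $\chi_R$ is the characteristic function of $R$. $\beta_S(d)(x,y)=\bigvee_{(a,x')\in\delta(x)}\bigwedge_{(b,y')\in\delta(y)}\max\{d_A(a,b),d(x',y')\}$ (the directed simulation behaviour function; empty join $0$, empty meet $1$). $\beta_s(R)=\{(x_1,x_2)\mid\forall a\in A,\,y_1\in\delta_a(x_1)\,\exists y_2\in\delta_a(x_2)\colon y_1Ry_2\}$ (the simulation behaviour function). *)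

theory Defs
  imports Main "HOL.Real"
begin

definition delta :: "('x \<Rightarrow> 'a \<Rightarrow> 'x \<Rightarrow> bool) \<Rightarrow> 'x \<Rightarrow> ('a \<times> 'x) set" where
  "delta tr x = {(a, x'). tr x a x'}"

definition delta_a :: "('x \<Rightarrow> 'a \<Rightarrow> 'x \<Rightarrow> bool) \<Rightarrow> 'a \<Rightarrow> 'x \<Rightarrow> 'x set" where
  "delta_a tr a x = {x'. tr x a x'}"

definition finitely_branching :: "('x \<Rightarrow> 'a \<Rightarrow> 'x \<Rightarrow> bool) \<Rightarrow> bool" where
  "finitely_branching tr \<longleftrightarrow> (\<forall>x. finite (delta tr x))"

definition metric01 :: "('a \<Rightarrow> 'a \<Rightarrow> real) \<Rightarrow> bool" where
  "metric01 dA \<longleftrightarrow> (\<forall>a b. 0 \<le> dA a b \<and> dA a b \<le> 1)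
     \<and> (\<forall>a b. dA a b = 0 \<longleftrightarrow> a = b)
     \<and> (\<forall>a b. dA a b = dA b a)
     \<and> (\<forall>a b c. dA a c \<le> dA a b + dA b c)"

definition DPMet :: "('x \<Rightarrow> 'x \<Rightarrow> real) set" where
  "DPMet = {d. (\<forall>x y. 0 \<le> d x y \<and> d x y \<le> 1) \<and> (\<forall>x. d x x = 0)
               \<and> (\<forall>x y z. d x z \<le> d x y + d y z)}"

definition Pre :: "('x \<times> 'x) set set" where
  "Pre = {R. refl R \<and> trans R}"

definition alphaM :: "('x \<Rightarrow> 'x \<Rightarrow> real) \<Rightarrow> ('x \<times> 'x) set" where
  "alphaM d = {(x, y). d x y = 0}"

definition gammaM :: "('x \<times> 'x) set \<Rightarrow> ('x \<Rightarrow> 'x \<Rightarrow> real)" where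
  "gammaM R = (\<lambda>x y. 1 - (if (x, y) \<in> R then 1 else 0))"

text \<open>Directed simulation behaviour function; empty join is 0, empty meet is 1.
  For finitely branching systems the join/meet are Max/Min of finite sets.\<close>
definition betaS :: "('x \<Rightarrow> 'a \<Rightarrow> 'x \<Rightarrow> bool) \<Rightarrow> ('a \<Rightarrow> 'a \<Rightarrow> real)
    \<Rightarrow> ('x \<Rightarrow> 'x \<Rightarrow> real) \<Rightarrow> ('x \<Rightarrow> 'x \<Rightarrow> real)" where
  "betaS tr dA d x y =
     (if delta tr x = {} then 0 else
      Max ((\<lambda>(a, x'). if delta tr y = {} then 1 else
             Min ((\<lambda>(b, y'). max (dA a b) (d x' y')) ` delta tr y)) ` delta tr x))"

definition betas :: "('x \<Rightarrow> 'a \<Rightarrow> 'x \<Rightarrow> bool) \<Rightarrow> ('x \<times> 'x) set \<Rightarrow> ('x \<times> 'x) set" where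
  "betas tr R = {(x1, x2). \<forall>a. \<forall>y1 \<in> delta_a tr a x1. \<exists>y2 \<in> delta_a tr a x2. (y1, y2) \<in> R}"

definition mu_DPMet :: "(('x \<Rightarrow> 'x \<Rightarrow> real) \<Rightarrow> ('x \<Rightarrow> 'x \<Rightarrow> real)) \<Rightarrow> ('x \<Rightarrow> 'x \<Rightarrow> real)" where
  "mu_DPMet f = (THE d. d \<in> DPMet \<and> f d = d \<and> (\<forall>d' \<in> DPMet. f d' = d' \<longrightarrow> d \<le> d'))"

text \<open>Least fixpoint of f in Pre(X), ordered by reverse inclusion (so: the largest fixed preorder).\<close>
definition mu_Pre :: "(('x \<times> 'x) set \<Rightarrow> ('x \<times> 'x) set) \<Rightarrow> ('x \<times> 'x) set" where
  "mu_Pre f = (THE R. R \<in> Pre \<and> f R = R \<and> (\<forall>R' \<in> Pre. f R' = R' \<longrightarrow> R \<supseteq> R'))"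

end

theory Submission
  imports Defs
begin

text \<open>A state x is simulated by y at distance 0 under \<open>\<beta>\<^sub>S(d)\<close> iff every move of x is answered
  by y with the same label and a d-distance-0 successor, which is the clause of \<open>\<beta>\<^sub>s(\<alpha>(d))\<close>;
  finite branching turns the join and meet into an attained Max and Min, so this needs no
  limit argument. For the fixpoints, finite branching makes \<open>\<beta>\<^sub>S\<close> continuous from below, so its
  least fixpoint D is the supremum of the Kleene iterates from 0. Then \<open>\<alpha>(D)\<close> is a
  \<open>\<beta>\<^sub>s\<close>-fixpoint, hence contained in the similarity S; conversely \<open>\<gamma>(S)\<close> is a
  \<open>\<beta>\<^sub>S\<close>-prefixpoint, so D \<open>\<le>\<close> \<open>\<gamma>(S)\<close>, i.e. S \<open>\<subseteq>\<close> \<open>\<alpha>(D)\<close>.\<close>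

lemma finite_delta: "finitely_branching tr \<Longrightarrow> finite (delta tr x)"
  unfolding finitely_branching_def by blast

lemma
  assumes "metric01 dA"
  shows metric01_nonneg: "0 \<le> dA a b"
    and metric01_le_one: "dA a b \<le> 1"
    and metric01_eq_0_iff: "dA a b = 0 \<longleftrightarrow> a = b"
    and metric01_triangle: "dA a c \<le> dA a b + dA b c"
  using assms unfolding metric01_def by blast+

lemma
  assumes "d \<in> DPMet"
  shows DPMet_nonneg: "0 \<le> d x y"
    and DPMet_le_one: "d x y \<le> 1"
    and DPMet_refl: "d x x = 0"
    and DPMet_triangle: "d x z \<le> d x y + d y z"
  using assms unfolding DPMet_def by blast+

lemma DPMetI:
  assumes "\<And>x y. 0 \<le> d x y" "\<And>x y. d x y \<le> 1" "\<And>x. d x x = 0"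
    "\<And>x y z. d x z \<le> d x y + d y z"
  shows "d \<in> DPMet"
  using assms unfolding DPMet_def by blast

lemma gammaM_apply: "gammaM R x y = (if (x, y) \<in> R then 0 else 1)"
  unfolding gammaM_def by simp

lemma alphaM_gammaM: "alphaM (gammaM R) = R"
  unfolding alphaM_def gammaM_def by auto

lemma alphaM_antimono:
  assumes "\<And>x y. 0 \<le> d x y" and "d \<le> d'"
  shows "alphaM d' \<subseteq> alphaM d"
proof
  fix p
  assume "p \<in> alphaM d'"
  then obtain x y where p: "p = (x, y)" and "d' x y = 0"
    by (auto simp: alphaM_def)
  moreover have "d x y \<le> d' x y"
    using assms(2) by (simp add: le_fun_def)
  ultimately show "p \<in> alphaM d"
    using assms(1)[of x y] by (simp add: alphaM_def)
qed

lemma mu_Pre_eq_gfp: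
  assumes "mono f" and "gfp f \<in> Pre"
  shows "mu_Pre f = gfp f"
  unfolding mu_Pre_def
proof (rule the_equality)
  show "gfp f \<in> Pre \<and> f (gfp f) = gfp f \<and> (\<forall>R \<in> Pre. f R = R \<longrightarrow> gfp f \<supseteq> R)"
    using assms gfp_fixpoint[OF assms(1)] gfp_upperbound[of _ f] by auto
next
  fix R
  assume "R \<in> Pre \<and> f R = R \<and> (\<forall>R' \<in> Pre. f R' = R' \<longrightarrow> R \<supseteq> R')"
  then show "R = gfp f"
    using assms gfp_fixpoint[OF assms(1)] gfp_upperbound[of R f] by blast
qed

lemma mono_betas: "mono (betas tr)"
  unfolding mono_def betas_def by blast

lemma gfp_betas_Pre: "gfp (betas tr) \<in> Pre"
proof -
  let ?S = "gfp (betas tr)"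
  have S: "betas tr ?S = ?S"
    by (rule gfp_fixpoint[OF mono_betas])
  have "Id \<subseteq> betas tr Id"
    unfolding betas_def by auto
  then have "Id \<subseteq> ?S"
    by (rule gfp_upperbound)
  moreover have "?S O ?S \<subseteq> betas tr (?S O ?S)"
  proof
    fix p
    assume "p \<in> ?S O ?S"
    then obtain x y z where p: "p = (x, z)" and "(x, y) \<in> betas tr ?S" "(y, z) \<in> betas tr ?S"
      using S by auto
    then show "p \<in> betas tr (?S O ?S)"
      unfolding betas_def by fastforce
  qed
  then have "?S O ?S \<subseteq> ?S"
    by (rule gfp_upperbound)
  ultimately show ?thesis
    unfolding Pre_def by (auto simp: refl_on_def trans_def)
qed

definition reply_dist :: "('x \<Rightarrow> 'a \<Rightarrow> 'x \<Rightarrow> bool) \<Rightarrow> ('a \<Rightarrow> 'a \<Rightarrow> real)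
    \<Rightarrow> ('x \<Rightarrow> 'x \<Rightarrow> real) \<Rightarrow> 'a \<Rightarrow> 'x \<Rightarrow> 'x \<Rightarrow> real" where
  "reply_dist tr dA d a x' y = (if delta tr y = {} then 1 else
     Min ((\<lambda>(b, y'). max (dA a b) (d x' y')) ` delta tr y))"

lemma betaS_eq_Max: "betaS tr dA d x y =
  (if delta tr x = {} then 0 else Max ((\<lambda>(a, x'). reply_dist tr dA d a x' y) ` delta tr x))"
  unfolding betaS_def reply_dist_def by simp

context
  fixes tr :: "'x \<Rightarrow> 'a \<Rightarrow> 'x \<Rightarrow> bool"
  assumes fb: "finitely_branching tr"
begin

lemma betaS_le_iff:
  assumes "0 \<le> c"
  shows "betaS tr dA d x y \<le> c \<longleftrightarrow> (\<forall>(a, x') \<in> delta tr x. reply_dist tr dA d a x' y \<le> c)"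
  using assms finite_delta[OF fb] by (auto simp: betaS_eq_Max Max_le_iff)

lemma reply_dist_le_betaS:
  "(a, x') \<in> delta tr x \<Longrightarrow> reply_dist tr dA d a x' y \<le> betaS tr dA d x y"
  using finite_delta[OF fb] by (auto simp: betaS_eq_Max intro!: Max_ge)

lemma reply_dist_le_iff:
  "reply_dist tr dA d a x' y \<le> c \<longleftrightarrow>
     (delta tr y = {} \<and> 1 \<le> c) \<or> (\<exists>(b, y') \<in> delta tr y. max (dA a b) (d x' y') \<le> c)"
  using finite_delta[OF fb] by (auto simp: reply_dist_def Min_le_iff split_def simp del: max.bounded_iff)

lemma less_reply_dist_iff:
  "c < reply_dist tr dA d a x' y \<longleftrightarrow>
     (delta tr y = {} \<longrightarrow> c < 1) \<and> (\<forall>(b, y') \<in> delta tr y. c < max (dA a b) (d x' y'))"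
  using finite_delta[OF fb] by (auto simp: reply_dist_def Min_gr_iff)

lemma reply_dist_le:
  "(b, y') \<in> delta tr y \<Longrightarrow> reply_dist tr dA d a x' y \<le> max (dA a b) (d x' y')"
  using reply_dist_le_iff by blast

lemma mono_betaS: "mono (betaS tr dA)"
proof (intro monoI le_funI)
  fix d d' :: "'x \<Rightarrow> 'x \<Rightarrow> real" and x y
  assume "d \<le> d'"
  then have "reply_dist tr dA d a x' y \<le> reply_dist tr dA d' a x' y" for a x'
    using finite_delta[OF fb]
    by (fastforce simp: reply_dist_def Min_le_iff Min_ge_iff le_fun_def max.coboundedI2)
  then have "reply_dist tr dA d a x' y \<le> betaS tr dA d' x y" if "(a, x') \<in> delta tr x" for a x'
    using reply_dist_le_betaS[OF that] order_trans by blast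
  then show "betaS tr dA d x y \<le> betaS tr dA d' x y"
    using finite_delta[OF fb] by (cases "delta tr x = {}") (auto simp: betaS_eq_Max Max_le_iff)
qed

context
  fixes dA :: "'a \<Rightarrow> 'a \<Rightarrow> real"
  assumes m: "metric01 dA"
begin

lemma reply_dist_nonneg: "(\<And>x y. 0 \<le> d x y) \<Longrightarrow> 0 \<le> reply_dist tr dA d a x' y"
  using finite_delta[OF fb] by (auto simp: reply_dist_def Min_ge_iff max.coboundedI2)

lemma reply_dist_le_one: "(\<And>x y. d x y \<le> 1) \<Longrightarrow> reply_dist tr dA d a x' y \<le> 1"
  using metric01_le_one[OF m] by (fastforce simp: reply_dist_le_iff)

lemma betaS_nonneg: "(\<And>x y. 0 \<le> d x y) \<Longrightarrow> 0 \<le> betaS tr dA d x y"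
  using finite_delta[OF fb] reply_dist_nonneg
  by (fastforce simp: betaS_eq_Max Max_ge_iff)

lemma betaS_le_one: "(\<And>x y. d x y \<le> 1) \<Longrightarrow> betaS tr dA d x y \<le> 1"
  using reply_dist_le_one by (auto simp: betaS_le_iff)

lemma alphaM_betaS:
  assumes nonneg: "\<And>x y. 0 \<le> d x y"
  shows "alphaM (betaS tr dA d) = betas tr (alphaM d)"
proof -
  have max_le_0: "max (dA a b) (d x' y') \<le> 0 \<longleftrightarrow> a = b \<and> d x' y' = 0" for a b x' y'
    using metric01_eq_0_iff[OF m] metric01_nonneg[OF m, of a b] nonneg[of x' y'] by auto
  have "betaS tr dA d x y = 0 \<longleftrightarrow>
      (\<forall>(a, x') \<in> delta tr x. \<exists>(b, y') \<in> delta tr y. a = b \<and> d x' y' = 0)" for x y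
  proof -
    have "0 \<le> betaS tr dA d x y"
      using nonneg by (rule betaS_nonneg)
    then have "betaS tr dA d x y = 0 \<longleftrightarrow> betaS tr dA d x y \<le> 0"
      by linarith
    also have "\<dots> \<longleftrightarrow> (\<forall>(a, x') \<in> delta tr x. reply_dist tr dA d a x' y \<le> 0)"
      by (simp add: betaS_le_iff)
    finally show ?thesis
      by (simp add: reply_dist_le_iff max_le_0 del: max.bounded_iff)
  qed
  then show ?thesis
    unfolding alphaM_def betas_def delta_def delta_a_def by auto
qed

lemma betaS_triangle:
  assumes d: "d \<in> DPMet"
  shows "betaS tr dA d x z \<le> betaS tr dA d x y + betaS tr dA d y z"
proof -
  note nonneg = DPMet_nonneg[OF d] and le_one = DPMet_le_one[OF d]
  have "reply_dist tr dA d a x' z \<le> betaS tr dA d x y + betaS tr dA d y z"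
    if ax: "(a, x') \<in> delta tr x" for a x'
  proof -
    have z_le_one: "reply_dist tr dA d a x' z \<le> 1"
      using reply_dist_le_one le_one by blast
    have xy_nonneg: "0 \<le> betaS tr dA d x y" and yz_nonneg: "0 \<le> betaS tr dA d y z"
      using betaS_nonneg nonneg by blast+
    consider "1 \<le> betaS tr dA d x y"
      | b y' where "(b, y') \<in> delta tr y" "max (dA a b) (d x' y') \<le> betaS tr dA d x y"
      using reply_dist_le_betaS[OF ax, of dA d y] by (auto simp: reply_dist_le_iff)
    then show ?thesis
    proof cases
      case 1
      then show ?thesis using z_le_one yz_nonneg by linarith
    next
      case (2 b y')
      consider "1 \<le> betaS tr dA d y z"
        | c z' where "(c, z') \<in> delta tr z" "max (dA b c) (d y' z') \<le> betaS tr dA d y z"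
        using reply_dist_le_betaS[OF 2(1), of dA d z] by (auto simp: reply_dist_le_iff)
      then show ?thesis
      proof cases
        case 1
        then show ?thesis using z_le_one xy_nonneg by linarith
      next
        case (2 c z')
        have "reply_dist tr dA d a x' z \<le> max (dA a c) (d x' z')"
          using reply_dist_le[OF 2(1)] .
        also have "\<dots> \<le> max (dA a b) (d x' y') + max (dA b c) (d y' z')"
          using metric01_triangle[OF m, of a c b] DPMet_triangle[OF d, of x' z' y']
            max.cobounded1[of "dA a b" "d x' y'"] max.cobounded2[of "d x' y'" "dA a b"]
            max.cobounded1[of "dA b c" "d y' z'"] max.cobounded2[of "d y' z'" "dA b c"]
          by (intro max.boundedI) linarith+
        finally show ?thesis using 2(2) \<open>max (dA a b) (d x' y') \<le> _\<close> by linarith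
      qed
    qed
  qed
  then show ?thesis
    using betaS_nonneg[OF DPMet_nonneg[OF d]] by (auto simp: betaS_le_iff add_nonneg_nonneg)
qed

lemma betaS_refl:
  assumes d: "d \<in> DPMet"
  shows "betaS tr dA d x x = 0"
proof -
  have "reply_dist tr dA d a x' x \<le> 0" if "(a, x') \<in> delta tr x" for a x'
    using reply_dist_le[OF that, of dA d a x'] metric01_eq_0_iff[OF m, of a a] DPMet_refl[OF d] by simp
  then have "betaS tr dA d x x \<le> 0"
    by (auto simp: betaS_le_iff)
  then show ?thesis
    using betaS_nonneg[OF DPMet_nonneg[OF d]] by (meson antisym)
qed

lemma betaS_DPMet:
  assumes d: "d \<in> DPMet"
  shows "betaS tr dA d \<in> DPMet"
  using betaS_nonneg[OF DPMet_nonneg[OF d]] betaS_le_one[OF DPMet_le_one[OF d]]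
    betaS_refl[OF d] betaS_triangle[OF d]
  by (rule DPMetI)

end

end

section \<open>Least fixpoints in DPMet by Kleene iteration\<close>

definition kleene_lim :: "(('x \<Rightarrow> 'x \<Rightarrow> real) \<Rightarrow> ('x \<Rightarrow> 'x \<Rightarrow> real)) \<Rightarrow> 'x \<Rightarrow> 'x \<Rightarrow> real" where
  "kleene_lim f x y = (SUP n. (f ^^ n) (\<lambda>_ _. 0) x y)"

locale DPMet_operator =
  fixes f :: "('x \<Rightarrow> 'x \<Rightarrow> real) \<Rightarrow> ('x \<Rightarrow> 'x \<Rightarrow> real)"
  assumes mono: "mono f"
    and maps_DPMet: "d \<in> DPMet \<Longrightarrow> f d \<in> DPMet"
begin

abbreviation iter :: "nat \<Rightarrow> 'x \<Rightarrow> 'x \<Rightarrow> real" where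
  "iter n \<equiv> (f ^^ n) (\<lambda>_ _. 0)"

lemma zero_DPMet: "(\<lambda>_ _. 0) \<in> DPMet"
  by (rule DPMetI) simp_all

lemma iter_DPMet: "iter n \<in> DPMet"
  by (induction n) (simp_all add: zero_DPMet maps_DPMet)

lemma iter_mono:
  assumes "m \<le> n"
  shows "iter m x y \<le> iter n x y"
proof -
  have "iter m \<le> iter n"
    using assms DPMet_nonneg[OF maps_DPMet[OF zero_DPMet]]
    by (intro funpow_mono2 mono) (auto simp: le_fun_def)
  then show ?thesis
    by (simp add: le_fun_def)
qed

lemma bdd_above_iter: "bdd_above (range (\<lambda>n. iter n x y))"
  using DPMet_le_one[OF iter_DPMet] by (intro bdd_aboveI) blast

lemma iter_le_kleene_lim: "iter n x y \<le> kleene_lim f x y"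
  unfolding kleene_lim_def by (rule cSUP_upper[OF _ bdd_above_iter]) simp

lemma kleene_lim_le: "(\<And>n. iter n x y \<le> c) \<Longrightarrow> kleene_lim f x y \<le> c"
  unfolding kleene_lim_def by (rule cSUP_least) auto

lemma eventually_less_iter:
  assumes "c < kleene_lim f x y"
  shows "eventually (\<lambda>n. c < iter n x y) sequentially"
proof -
  obtain N where "c < iter N x y"
    using assms less_cSUP_iff[OF _ bdd_above_iter] unfolding kleene_lim_def by blast
  then show ?thesis
    using iter_mono by (intro eventually_sequentiallyI[of N]) (meson less_le_trans)
qed

lemma kleene_lim_DPMet: "kleene_lim f \<in> DPMet"
proof (rule DPMetI)
  fix x y z
  show "0 \<le> kleene_lim f x y"
    using iter_le_kleene_lim[of 0] by simp
  show "kleene_lim f x y \<le> 1"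
    using DPMet_le_one[OF iter_DPMet] by (rule kleene_lim_le)
  show "kleene_lim f x x = 0"
    using DPMet_refl[OF iter_DPMet] iter_le_kleene_lim[of 0]
    by (intro antisym kleene_lim_le) auto
  show "kleene_lim f x z \<le> kleene_lim f x y + kleene_lim f y z"
  proof (rule kleene_lim_le)
    fix n
    have "iter n x z \<le> iter n x y + iter n y z"
      using iter_DPMet by (rule DPMet_triangle)
    also have "\<dots> \<le> kleene_lim f x y + kleene_lim f y z"
      by (intro add_mono iter_le_kleene_lim)
    finally show "iter n x z \<le> kleene_lim f x y + kleene_lim f y z" .
  qed
qed

lemma kleene_lim_le_prefixpoint:
  assumes "\<And>x y. 0 \<le> g x y" and "f g \<le> g"
  shows "kleene_lim f \<le> g"
proof -
  have "iter n \<le> g" for n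
  proof (induction n)
    case 0
    then show ?case using assms(1) by (simp add: le_fun_def)
  next
    case (Suc n)
    then show ?case using monoD[OF mono Suc.IH] assms(2) by simp
  qed
  then show ?thesis
    by (auto simp: le_fun_def intro: kleene_lim_le)
qed

lemma kleene_lim_le_image: "kleene_lim f \<le> f (kleene_lim f)"
proof (intro le_funI kleene_lim_le)
  fix x y n
  show "iter n x y \<le> f (kleene_lim f) x y"
  proof (cases n)
    case 0
    then show ?thesis using DPMet_nonneg[OF maps_DPMet[OF kleene_lim_DPMet]] by simp
  next
    case (Suc k)
    have "iter k \<le> kleene_lim f"
      by (auto simp: le_fun_def iter_le_kleene_lim)
    then have "f (iter k) \<le> f (kleene_lim f)"
      by (rule monoD[OF mono])
    then show ?thesis
      by (simp add: Suc le_fun_def)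
  qed
qed

lemma kleene_lim_fixpoint:
  "f (kleene_lim f) \<le> kleene_lim f \<Longrightarrow> f (kleene_lim f) = kleene_lim f"
  by (rule antisym[OF _ kleene_lim_le_image])

lemma mu_DPMet_eq_kleene_lim:
  assumes "f (kleene_lim f) \<le> kleene_lim f"
  shows "mu_DPMet f = kleene_lim f"
proof -
  have fixpoint: "f (kleene_lim f) = kleene_lim f"
    using assms by (rule kleene_lim_fixpoint)
  have least: "kleene_lim f \<le> d" if "d \<in> DPMet" "f d = d" for d
    using that DPMet_nonneg by (intro kleene_lim_le_prefixpoint) auto
  show ?thesis
    unfolding mu_DPMet_def
  proof (rule the_equality)
    show "kleene_lim f \<in> DPMet \<and> f (kleene_lim f) = kleene_lim f \<and>
        (\<forall>d \<in> DPMet. f d = d \<longrightarrow> kleene_lim f \<le> d)"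
      using kleene_lim_DPMet fixpoint least by blast
  next
    fix d
    assume "d \<in> DPMet \<and> f d = d \<and> (\<forall>d' \<in> DPMet. f d' = d' \<longrightarrow> d \<le> d')"
    then show "d = kleene_lim f"
      using kleene_lim_DPMet fixpoint least by (blast intro: antisym)
  qed
qed

end

lemma DPMet_operator_betaS:
  "finitely_branching tr \<Longrightarrow> metric01 dA \<Longrightarrow> DPMet_operator (betaS tr dA)"
  by unfold_locales (simp_all add: mono_betaS betaS_DPMet)

text \<open>Continuity from below: a reply of y that is too long in the limit is already too long
  after finitely many iterations, uniformly over the finitely many replies.\<close>

lemma betaS_kleene_lim_le:
  assumes fb: "finitely_branching tr" and m: "metric01 dA"
  shows "betaS tr dA (kleene_lim (betaS tr dA)) \<le> kleene_lim (betaS tr dA)"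
proof -
  interpret DPMet_operator "betaS tr dA"
    using DPMet_operator_betaS[OF assms] .
  let ?D = "kleene_lim (betaS tr dA)"
  have "reply_dist tr dA ?D a x' y \<le> ?D x y" if ax: "(a, x') \<in> delta tr x" for x y a x'
  proof (rule ccontr)
    assume "\<not> ?thesis"
    then have less: "?D x y < reply_dist tr dA ?D a x' y"
      by simp
    then have empty: "delta tr y = {} \<longrightarrow> ?D x y < 1"
      by (simp add: less_reply_dist_iff[OF fb])
    have "eventually (\<lambda>n. ?D x y < max (dA a b) (iter n x' y')) sequentially"
      if "(b, y') \<in> delta tr y" for b y'
    proof -
      have "?D x y < dA a b \<or> ?D x y < ?D x' y'"
        using less that by (auto simp: less_reply_dist_iff[OF fb])
      then show ?thesis
      proof
        assume "?D x y < dA a b"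
        then show ?thesis
          by (simp add: less_max_iff_disj)
      next
        assume "?D x y < ?D x' y'"
        then have "eventually (\<lambda>n. ?D x y < iter n x' y') sequentially"
          by (rule eventually_less_iter)
        then show ?thesis
          by (rule eventually_mono) (simp add: less_max_iff_disj)
      qed
    qed
    then have "eventually (\<lambda>n. \<forall>(b, y') \<in> delta tr y. ?D x y < max (dA a b) (iter n x' y'))
        sequentially"
      using finite_delta[OF fb] by (intro eventually_ball_finite) auto
    then obtain n where "\<forall>(b, y') \<in> delta tr y. ?D x y < max (dA a b) (iter n x' y')"
      unfolding eventually_sequentially by blast
    then have "?D x y < reply_dist tr dA (iter n) a x' y"
      using empty by (simp add: less_reply_dist_iff[OF fb])
    also have "\<dots> \<le> betaS tr dA (iter n) x y"
      by (rule reply_dist_le_betaS[OF fb ax])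
    also have "\<dots> \<le> ?D x y"
      using iter_le_kleene_lim[of "Suc n"] by simp
    finally show False
      by simp
  qed
  then show ?thesis
    using DPMet_nonneg[OF kleene_lim_DPMet] by (auto simp: le_fun_def betaS_le_iff[OF fb])
qed

lemma betaS_gammaM_le:
  assumes fb: "finitely_branching tr" and m: "metric01 dA" and S: "betas tr S = S"
  shows "betaS tr dA (gammaM S) \<le> gammaM S"
proof (rule le_funI, rule le_funI)
  fix x y
  show "betaS tr dA (gammaM S) x y \<le> gammaM S x y"
  proof (cases "(x, y) \<in> S")
    case True
    have "alphaM (betaS tr dA (gammaM S)) = S"
      using alphaM_betaS[OF fb m, of "gammaM S"] S by (simp add: gammaM_apply alphaM_gammaM)
    then have "(x, y) \<in> alphaM (betaS tr dA (gammaM S))"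
      using True by simp
    then show ?thesis
      using True by (simp add: alphaM_def gammaM_apply)
  next
    case False
    then show ?thesis
      using betaS_le_one[OF fb m, of "gammaM S"] by (simp add: gammaM_apply)
  qed
qed

lemma alphaM_kleene_lim_betaS:
  assumes fb: "finitely_branching tr" and m: "metric01 dA"
  shows "alphaM (kleene_lim (betaS tr dA)) = gfp (betas tr)"
proof
  interpret DPMet_operator "betaS tr dA"
    using DPMet_operator_betaS[OF fb m] .
  let ?S = "gfp (betas tr)" and ?D = "kleene_lim (betaS tr dA)"
  have "betas tr (alphaM ?D) = alphaM (betaS tr dA ?D)"
    using alphaM_betaS[OF fb m DPMet_nonneg[OF kleene_lim_DPMet]] by simp
  also have "\<dots> = alphaM ?D"
    using kleene_lim_fixpoint[OF betaS_kleene_lim_le[OF fb m]] by simp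
  finally show "alphaM ?D \<subseteq> ?S"
    by (intro gfp_upperbound) simp
  have "?D \<le> gammaM ?S"
    using betaS_gammaM_le[OF fb m gfp_fixpoint[OF mono_betas]]
    by (rule kleene_lim_le_prefixpoint[rotated]) (simp add: gammaM_apply)
  then have "alphaM (gammaM ?S) \<subseteq> alphaM ?D"
    by (rule alphaM_antimono[rotated]) (rule DPMet_nonneg[OF kleene_lim_DPMet])
  then show "?S \<subseteq> alphaM ?D"
    by (simp add: alphaM_gammaM)
qed

theorem mainTheorem18:
  fixes tr :: "'x \<Rightarrow> 'a \<Rightarrow> 'x \<Rightarrow> bool" and dA :: "'a \<Rightarrow> 'a \<Rightarrow> real"
  assumes "metric01 dA"
    and "finitely_branching tr"
  shows "(\<forall>d \<in> DPMet. alphaM (betaS tr dA d) = betas tr (alphaM d))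
         \<and> mu_Pre (betas tr) = alphaM (mu_DPMet (betaS tr dA))"
proof
  note m = assms(1) and fb = assms(2)
  show "\<forall>d \<in> DPMet. alphaM (betaS tr dA d) = betas tr (alphaM d)"
    by (intro ballI alphaM_betaS[OF fb m] DPMet_nonneg)
  interpret DPMet_operator "betaS tr dA"
    using DPMet_operator_betaS[OF fb m] .
  have "mu_DPMet (betaS tr dA) = kleene_lim (betaS tr dA)"
    by (rule mu_DPMet_eq_kleene_lim[OF betaS_kleene_lim_le[OF fb m]])
  then show "mu_Pre (betas tr) = alphaM (mu_DPMet (betaS tr dA))"
    by (simp add: mu_Pre_eq_gfp[OF mono_betas gfp_betas_Pre] alphaM_kleene_lim_betaS[OF fb m])
qed

end
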